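(* For all integers $n\ge k\ge 2$, $$(\lceil \log (k+1)\rceil+1)\left\lfloor \frac{n}{4k}\right\rfloor \le \gamma_{\rm i}(P_n^k)\le \frac{\lceil \log(k+1)\rceil+2}{2k+2}\,n+\lceil\log(k+1)\rceil+2,$$ where $\log$ is the logarithm of base $2$. In particular, $\gamma_{\rm i}(P_n^k)=\Theta\!\left(\frac{\log k}{k}\,n\right)$ as $n\to\infty$.
   Context: $P_n$ is the path on $n$ vertices. The $k$-th power $G^k$ of a graph $G$ has vertex set $V(G)$, with $uv$ an edge iff $1\le d_G(u,v)\le k$. Indicated domination game on a graph $G$: two players, Dominator and Staller, alternate. In each round Dominator indicates a vertex $v$ not yet dominated by the vertices previously selected by Staller (a vertex dominates itself and its neighbors), and Staller must select a vertex of the closed neighborhood $N[v]$, adding it to a set $D$. The game ends when $D$ is a dominating set of $G$. Dominator wants to minimize $|D|$ and Staller to maximize it; the size of $D$ under optimal play of both is the indicated domination number $\gamma_{\rm i}(G)$. *)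

theory Defs
  imports Complex_Main
begin

text \<open>A finite graph is given by a vertex set V and a symmetric irreflexive
adjacency predicate E.  Closed neighbourhood of v.\<close>
definition cnbhd :: "'a set \<Rightarrow> ('a \<Rightarrow> 'a \<Rightarrow> bool) \<Rightarrow> 'a \<Rightarrow> 'a set" where
  "cnbhd V E v = {u \<in> V. u = v \<or> E v u}"

definition dominated_by :: "'a set \<Rightarrow> ('a \<Rightarrow> 'a \<Rightarrow> bool) \<Rightarrow> 'a set \<Rightarrow> 'a set" where
  "dominated_by V E D = {v \<in> V. \<exists>u \<in> D. u \<in> cnbhd V E v}"

definition is_dominating :: "'a set \<Rightarrow> ('a \<Rightarrow> 'a \<Rightarrow> bool) \<Rightarrow> 'a set \<Rightarrow> bool" where
  "is_dominating V E D \<longleftrightarrow> dominated_by V E D = V"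

text \<open>ind_dom_win V E m D: starting from the position where Staller has
selected the set D, Dominator has a strategy guaranteeing that the game ends
after at most m further selections, whatever Staller does.\<close>
fun ind_dom_win :: "'a set \<Rightarrow> ('a \<Rightarrow> 'a \<Rightarrow> bool) \<Rightarrow> nat \<Rightarrow> 'a set \<Rightarrow> bool" where
  "ind_dom_win V E 0 D = is_dominating V E D"
| "ind_dom_win V E (Suc m) D =
     (is_dominating V E D \<or>
      (\<exists>v \<in> V. v \<notin> dominated_by V E D \<and>
          (\<forall>u \<in> cnbhd V E v. ind_dom_win V E m (insert u D))))"

definition indicated_domination_number :: "'a set \<Rightarrow> ('a \<Rightarrow> 'a \<Rightarrow> bool) \<Rightarrow> nat" where
  "indicated_domination_number V E = (LEAST m. ind_dom_win V E m {})"

definition path_dist :: "nat \<Rightarrow> nat \<Rightarrow> nat" where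
  "path_dist i j = (if i \<le> j then j - i else i - j)"

definition path_power_adj :: "nat \<Rightarrow> nat \<Rightarrow> nat \<Rightarrow> bool" where
  "path_power_adj k i j \<longleftrightarrow> 1 \<le> path_dist i j \<and> path_dist i j \<le> k"

definition gamma_i_path_power :: "nat \<Rightarrow> nat \<Rightarrow> nat" where
  "gamma_i_path_power n k = indicated_domination_number {..<n} (path_power_adj k)"

end

theory Submission
  imports Defs "HOL-Library.Log_Nat"
begin

(* Upper bound: Dominator sweeps the path from left to right.  When the vertices below x are
   dominated, he indicates x + 2k + 1; Staller's answer leaves an undominated gap of at most
   2k + 1 vertices behind it and pushes the dominated frontier forward by at least 2k + 2.
   Dominator closes the gap by binary search in ceil(log(k+1)) + 1 rounds, which costs
   ceil(log(k+1)) + 2 rounds per 2k + 2 vertices.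

   Lower bound: cut the path into n div 4k blocks of 4k vertices.  Staller keeps track of an
   interval of undominated vertices inside the middle 2k vertices of every block.  Since
   consecutive middles are more than 2k apart, Staller can always answer so that a single
   tracked interval changes and keeps at least half of its length; hence the sum of the bit
   lengths of the tracked lengths drops by at most one per round.  Initially this sum is
   (n div 4k) * bitlen(2k) >= (ceil(log(k+1)) + 1) * (n div 4k). *)

section \<open>The indicated domination game\<close>

definition undominated :: "'a set \<Rightarrow> ('a \<Rightarrow> 'a \<Rightarrow> bool) \<Rightarrow> 'a set \<Rightarrow> 'a set" where
  "undominated V E D = V - dominated_by V E D"

lemma undominated_empty [simp]: "undominated V E {} = V"
  by (simp add: undominated_def dominated_by_def)

lemma undominated_insert:
  "undominated V E (insert u D) = {x \<in> undominated V E D. u \<notin> cnbhd V E x}"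
  by (auto simp: undominated_def dominated_by_def)

lemma is_dominating_iff_undominated_eq_empty:
  "is_dominating V E D \<longleftrightarrow> undominated V E D = {}"
  by (auto simp: is_dominating_def undominated_def dominated_by_def)

lemma ind_dom_win_if_dominating: "is_dominating V E D \<Longrightarrow> ind_dom_win V E m D"
  by (cases m) auto

lemma ind_dom_win_SucI:
  assumes "v \<in> undominated V E D"
    and "\<And>u. u \<in> cnbhd V E v \<Longrightarrow> ind_dom_win V E m (insert u D)"
  shows "ind_dom_win V E (Suc m) D"
  using assms by (auto simp: undominated_def)

lemma ind_dom_win_mono: "ind_dom_win V E m D \<Longrightarrow> m \<le> m' \<Longrightarrow> ind_dom_win V E m' D"
proof (induction m arbitrary: m' D)
  case 0
  then show ?case by (auto intro: ind_dom_win_if_dominating)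
next
  case (Suc m)
  then obtain m'' where "m' = Suc m''" "m \<le> m''"
    by (cases m') auto
  with Suc show ?case by fastforce
qed

lemma ind_dom_win_potential_le:
  fixes R :: "'a set \<Rightarrow> 's \<Rightarrow> bool" and \<Phi> :: "'s \<Rightarrow> nat"
  assumes "ind_dom_win V E m D" "R D s"
    and dominating: "\<And>D s. R D s \<Longrightarrow> is_dominating V E D \<Longrightarrow> \<Phi> s = 0"
    and answer: "\<And>D s v. R D s \<Longrightarrow> v \<in> undominated V E D \<Longrightarrow>
        \<exists>u \<in> cnbhd V E v. \<exists>s'. R (insert u D) s' \<and> \<Phi> s \<le> \<Phi> s' + 1"
  shows "\<Phi> s \<le> m"
  using assms(1,2)
proof (induction m arbitrary: D s)
  case 0
  then show ?case using dominating by simp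
next
  case (Suc m)
  show ?case
  proof (cases "is_dominating V E D")
    case True
    then show ?thesis using dominating Suc.prems(2) by simp
  next
    case False
    then obtain v where v: "v \<in> undominated V E D"
      and wins: "\<forall>u \<in> cnbhd V E v. ind_dom_win V E m (insert u D)"
      using Suc.prems(1) by (auto simp: undominated_def)
    obtain u s' where "u \<in> cnbhd V E v" "R (insert u D) s'" "\<Phi> s \<le> \<Phi> s' + 1"
      using answer[OF Suc.prems(2) v] by blast
    with wins Suc.IH have "\<Phi> s' \<le> m" by blast
    with \<open>\<Phi> s \<le> \<Phi> s' + 1\<close> show ?thesis by simp
  qed
qed

lemma indicated_domination_number_le:
  "ind_dom_win V E m {} \<Longrightarrow> indicated_domination_number V E \<le> m"
  unfolding indicated_domination_number_def by (rule Least_le)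

lemma ind_dom_win_indicated_domination_number:
  "ind_dom_win V E m {} \<Longrightarrow> ind_dom_win V E (indicated_domination_number V E) {}"
  unfolding indicated_domination_number_def by (rule LeastI)

section \<open>Dominator's strategy on powers of paths\<close>

lemma path_dist_le_iff: "path_dist i j \<le> k \<longleftrightarrow> i \<le> j + k \<and> j \<le> i + k"
  by (auto simp: path_dist_def)

lemma cnbhd_path_power:
  "cnbhd {..<n} (path_power_adj k) v = {u. u < n \<and> path_dist v u \<le> k}"
  by (auto simp: cnbhd_def path_power_adj_def path_dist_def)

lemma undominated_path_power_insert:
  "u < n \<Longrightarrow> undominated {..<n} (path_power_adj k) (insert u D)
     = {x \<in> undominated {..<n} (path_power_adj k) D. x + k < u \<or> u + k < x}"
  by (auto simp: undominated_insert cnbhd_path_power path_dist_le_iff)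

lemma undominated_path_power_less: "x \<in> undominated {..<n} (path_power_adj k) D \<Longrightarrow> x < n"
  by (simp add: undominated_def)

(* Binary search: Dominator indicates the middle of the gap {a..<c}; as the gap has at most
   2k + 2 vertices, every answer dominates the whole gap on one side of the middle. *)
lemma path_power_win_clear_gap:
  assumes "undominated {..<n} (path_power_adj k) D = {a..<c} \<union> R"
    and "c - a < 2 ^ j" and "c \<le> a + 2*k + 2" and "\<forall>x \<in> R. c + 2*k \<le> x"
    and rest: "\<And>D'. undominated {..<n} (path_power_adj k) D' = R \<Longrightarrow>
        ind_dom_win {..<n} (path_power_adj k) m D'"
  shows "ind_dom_win {..<n} (path_power_adj k) (j + m) D"
  using assms(1-4)
proof (induction j arbitrary: D a c)
  case 0
  then show ?case using rest by simp
next
  case (Suc j)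
  show ?case
  proof (cases "a < c")
    case False
    then have "undominated {..<n} (path_power_adj k) D = R"
      using Suc.prems(1) by simp
    then show ?thesis
      using rest ind_dom_win_mono by (metis le_add2)
  next
    case True
    define v where "v = (a + c - 1) div 2"
    have "a \<le> v" "v < c" "c - (v + 1) < 2 ^ j" "v - a < 2 ^ j"
      using True Suc.prems(2) unfolding v_def by auto
    then have v: "v \<in> undominated {..<n} (path_power_adj k) D"
      using Suc.prems(1) by auto
    show ?thesis unfolding add_Suc
    proof (rule ind_dom_win_SucI[OF v])
      fix u assume "u \<in> cnbhd {..<n} (path_power_adj k) v"
      then have u: "u < n" "u \<le> v + k" "v \<le> u + k"
        by (auto simp: cnbhd_path_power path_dist_le_iff)
      have R_kept: "\<forall>x \<in> R. u + k < x"
        using Suc.prems(4) u \<open>v < c\<close> by fastforce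
      consider "u \<le> a + k" | "c \<le> u + k + 1"
        using Suc.prems(3) u \<open>a \<le> v\<close> by linarith
      then show "ind_dom_win {..<n} (path_power_adj k) (j + m) (insert u D)"
      proof cases
        case 1
        have "undominated {..<n} (path_power_adj k) (insert u D) = {u + k + 1..<c} \<union> R"
          using 1 R_kept u(3) \<open>a \<le> v\<close>
          unfolding undominated_path_power_insert[OF u(1)] Suc.prems(1) by auto
        then show ?thesis
          using Suc.prems(3,4) \<open>a \<le> v\<close> \<open>c - (v + 1) < 2 ^ j\<close> u
          by (intro Suc.IH[of _ "u + k + 1" c]) auto
      next
        case 2
        have "undominated {..<n} (path_power_adj k) (insert u D) = {a..<u - k} \<union> R"
          using 2 R_kept u(2) \<open>v < c\<close>
          unfolding undominated_path_power_insert[OF u(1)] Suc.prems(1) by auto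
        then show ?thesis
          using Suc.prems(3,4) \<open>v < c\<close> \<open>v - a < 2 ^ j\<close> u
          by (intro Suc.IH[of _ a "u - k"]) force+
      qed
    qed
  qed
qed

lemma path_power_win_sweep_round:
  assumes "k + 1 \<le> 2 ^ L"
    and "undominated {..<n} (path_power_adj k) D = {x..<n}" and "x + 2*k + 2 \<le> n"
    and next_round: "\<And>y D'. x + 2*k + 2 \<le> y \<Longrightarrow>
        undominated {..<n} (path_power_adj k) D' = {y..<n} \<Longrightarrow>
        ind_dom_win {..<n} (path_power_adj k) m D'"
  shows "ind_dom_win {..<n} (path_power_adj k) (Suc (L + 1 + m)) D"
proof -
  define v where "v = x + 2*k + 1"
  have v: "v \<in> undominated {..<n} (path_power_adj k) D"
    using assms(2,3) unfolding v_def by simp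
  show ?thesis
  proof (rule ind_dom_win_SucI[OF v])
    fix u assume "u \<in> cnbhd {..<n} (path_power_adj k) v"
    then have u: "u < n" "u \<le> v + k" "v \<le> u + k"
      by (auto simp: cnbhd_path_power path_dist_le_iff)
    show "ind_dom_win {..<n} (path_power_adj k) (L + 1 + m) (insert u D)"
    proof (rule path_power_win_clear_gap[where a = x and c = "u - k" and R = "{u + k + 1..<n}"])
      show "undominated {..<n} (path_power_adj k) (insert u D) = {x..<u - k} \<union> {u + k + 1..<n}"
        unfolding undominated_path_power_insert[OF u(1)] assms(2)
        using u unfolding v_def by auto
      show "u - k - x < 2 ^ (L + 1)"
        using u assms(1) unfolding v_def by simp
      show "ind_dom_win {..<n} (path_power_adj k) m D'"
        if "undominated {..<n} (path_power_adj k) D' = {u + k + 1..<n}" for D'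
        using next_round[OF _ that] u unfolding v_def by simp
    qed (use u in \<open>auto simp: v_def\<close>)
  qed
qed

lemma div_less_div_if_add_le: "m + d \<le> n \<Longrightarrow> 0 < d \<Longrightarrow> m div d < n div (d :: nat)"
  using div_le_mono[of "m + d" n d] by simp

lemma path_power_win_sweep:
  assumes "k + 1 \<le> 2 ^ L"
    and "undominated {..<n} (path_power_adj k) D = {x..<n}"
  shows "ind_dom_win {..<n} (path_power_adj k) ((L + 2) * ((n - x) div (2*k + 2)) + L + 1) D"
  using assms(2)
proof (induction "n - x" arbitrary: x D rule: less_induct)
  case less
  show ?case
  proof (cases "x + 2*k + 2 \<le> n")
    case False
    have "ind_dom_win {..<n} (path_power_adj k) ((L + 1) + 0) D"
      by (rule path_power_win_clear_gap[where a = x and c = n and R = "{}"])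
        (use less.prems False assms(1) in \<open>auto intro: ind_dom_win_if_dominating
           simp: is_dominating_iff_undominated_eq_empty\<close>)
    then show ?thesis
      by (rule ind_dom_win_mono) simp
  next
    case True
    define q where "q = (n - x) div (2*k + 2)"
    have "0 div (2*k + 2) < q"
      unfolding q_def using True by (intro div_less_div_if_add_le) auto
    then obtain q' where q': "q = Suc q'"
      using gr0_implies_Suc by auto
    have "ind_dom_win {..<n} (path_power_adj k) (Suc (L + 1 + ((L + 2) * q' + L + 1))) D"
    proof (rule path_power_win_sweep_round[OF assms(1) less.prems True])
      fix y D' assume y: "x + 2*k + 2 \<le> y"
        and D': "undominated {..<n} (path_power_adj k) D' = {y..<n}"
      have "(n - y) div (2*k + 2) < q"
        unfolding q_def using y True by (intro div_less_div_if_add_le) auto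
      then have "(n - y) div (2*k + 2) \<le> q'"
        unfolding q' by simp
      then have "(L + 2) * ((n - y) div (2*k + 2)) \<le> (L + 2) * q'"
        by (rule mult_le_mono2)
      then have "(L + 2) * ((n - y) div (2*k + 2)) + L + 1 \<le> (L + 2) * q' + L + 1"
        by simp
      moreover have "n - y < n - x"
        using y True by simp
      ultimately show "ind_dom_win {..<n} (path_power_adj k) ((L + 2) * q' + L + 1) D'"
        using less.hyps D' ind_dom_win_mono by blast
    qed
    then show ?thesis
      unfolding q_def[symmetric] q' by (simp add: algebra_simps)
  qed
qed

lemma ind_dom_win_path_power:
  "ind_dom_win {..<n} (path_power_adj k)
     ((ceillog2 (k + 1) + 2) * (n div (2*k + 2)) + ceillog2 (k + 1) + 1) {}"
  using path_power_win_sweep[OF le_two_power_ceillog2, where D = "{}" and x = 0]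
  by (simp only: undominated_empty atLeast0LessThan diff_zero simp_thms)

lemma gamma_i_path_power_upper:
  "gamma_i_path_power n k
     \<le> (ceillog2 (k + 1) + 2) * (n div (2*k + 2)) + ceillog2 (k + 1) + 1"
  unfolding gamma_i_path_power_def
  by (rule indicated_domination_number_le) (rule ind_dom_win_path_power)

section \<open>Staller's strategy on powers of paths\<close>

lemma block_end_le: "i < N \<Longrightarrow> 4*k*i + 4*k \<le> 4*k*(N :: nat)"
  using mult_le_mono2[of "i + 1" N "4*k"] by simp

lemma block_of_vertex:
  fixes v N :: nat
  assumes "v < 4*k*N"
  obtains q where "q < N" "4*k*q \<le> v" "v < 4*k*q + 4*k"
proof
  define q where "q = v div (4*k)"
  have "0 < k"
    using assms by (cases k) auto
  have "v = 4*k*q + v mod (4*k)"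
    unfolding q_def by simp
  moreover have "v mod (4*k) < 4*k"
    using \<open>0 < k\<close> by simp
  ultimately show "4*k*q \<le> v" "v < 4*k*q + 4*k"
    by linarith+
  then show "q < N"
    using assms by (meson le_less_trans mult_less_cancel1)
qed

lemma block_middle_far:
  fixes i q u x :: nat
  assumes "i \<noteq> q" "4*k*q \<le> u" "u < 4*k*q + 4*k" "4*k*i + k \<le> x" "x < 4*k*i + 3*k"
  shows "x + k < u \<or> u + k < x"
  using assms block_end_le[of i q k] block_end_le[of q i k] by (cases "i < q") auto

(* Staller's answer in the block starting at m: near the ends of the block it costs at most one
   end vertex of the tracked interval {a..<b}, in the middle part Staller keeps the larger half. *)
lemma block_answer:
  fixes m a b v :: nat
  assumes "{a..<b} \<subseteq> {m + k..<m + 3*k}" "m \<le> v" "v < m + 4*k"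
  obtains u \<alpha> \<beta> where "m \<le> u" "u < m + 4*k" "path_dist v u \<le> k" "a \<le> \<alpha>" "\<beta> \<le> b"
    "\<And>x. \<alpha> \<le> x \<Longrightarrow> x < \<beta> \<Longrightarrow> x + k < u \<or> u + k < x"
    "(b - a) div 2 \<le> \<beta> - \<alpha>"
proof (cases "a < b")
  case False
  show ?thesis
    by (rule that[of v a b]) (use False assms(2,3) in \<open>auto simp: path_dist_le_iff\<close>)
next
  case True
  have middle: "m + k \<le> a" "b \<le> m + 3*k"
    using assms(1) True by simp_all
  have half: "2 * ((b - a) div 2) \<le> b - a"
    by simp
  consider "v < m + k" | "m + 3*k \<le> v"
    | "m + k \<le> v" "v < m + 3*k" "v < a + (b - a) div 2"
    | "m + k \<le> v" "v < m + 3*k" "a + (b - a) div 2 \<le> v"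
    by linarith
  then show ?thesis
  proof cases
    case 1
    show ?thesis
      by (rule that[of m "a + 1" b]) (use 1 middle assms(2) in \<open>auto simp: path_dist_le_iff\<close>)
  next
    case 2
    show ?thesis
      by (rule that[of "m + 4*k - 1" a "b - 1"])
        (use 2 middle assms(3) in \<open>auto simp: path_dist_le_iff\<close>)
  next
    case 3
    show ?thesis
      by (rule that[of "v - k" "max a (v + 1)" b]) (use 3 half in \<open>auto simp: path_dist_le_iff\<close>)
  next
    case 4
    show ?thesis
      by (rule that[of "v + k" a "min b v"]) (use 4 half in \<open>auto simp: path_dist_le_iff\<close>)
  qed
qed

(* Block i consists of the vertices 4ki, ..., 4ki + 4k - 1; Staller tracks an interval
   {a i..<b i} of undominated vertices in the middle half of each of the first N blocks. *)
definition tracked_intervals ::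
    "nat \<Rightarrow> nat \<Rightarrow> nat \<Rightarrow> nat set \<Rightarrow> (nat \<Rightarrow> nat) \<Rightarrow> (nat \<Rightarrow> nat) \<Rightarrow> bool" where
  "tracked_intervals n k N D a b \<longleftrightarrow>
     (\<forall>i < N. {a i..<b i} \<subseteq> {4*k*i + k..<4*k*i + 3*k} \<inter> undominated {..<n} (path_power_adj k) D)"

lemma tracked_intervals_subset_middle:
  "tracked_intervals n k N D a b \<Longrightarrow> i < N \<Longrightarrow> {a i..<b i} \<subseteq> {4*k*i + k..<4*k*i + 3*k}"
  unfolding tracked_intervals_def by blast

lemma tracked_intervals_shrink:
  assumes "tracked_intervals n k N D a b" "a q \<le> \<alpha>" "\<beta> \<le> b q"
  shows "tracked_intervals n k N D (a(q := \<alpha>)) (b(q := \<beta>))"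
  unfolding tracked_intervals_def
proof (intro allI impI)
  fix i assume "i < N"
  have "{(a(q := \<alpha>)) i..<(b(q := \<beta>)) i} \<subseteq> {a i..<b i}"
    using assms(2,3) by auto
  also have "\<dots> \<subseteq> {4*k*i + k..<4*k*i + 3*k} \<inter> undominated {..<n} (path_power_adj k) D"
    using assms(1) \<open>i < N\<close> unfolding tracked_intervals_def by blast
  finally show "{(a(q := \<alpha>)) i..<(b(q := \<beta>)) i}
      \<subseteq> {4*k*i + k..<4*k*i + 3*k} \<inter> undominated {..<n} (path_power_adj k) D" .
qed

lemma tracked_intervals_insert:
  assumes "tracked_intervals n k N D a b" "u < n"
    and "\<And>i x. i < N \<Longrightarrow> a i \<le> x \<Longrightarrow> x < b i \<Longrightarrow> x + k < u \<or> u + k < x"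
  shows "tracked_intervals n k N (insert u D) a b"
  using assms(1,3) unfolding tracked_intervals_def undominated_path_power_insert[OF assms(2)]
  by (auto simp: subset_iff)

lemma tracked_intervals_insert_beyond:
  assumes "tracked_intervals n k N D a b" "4*k*N \<le> u" "u < n"
  shows "tracked_intervals n k N (insert u D) a b"
proof (rule tracked_intervals_insert[OF assms(1,3)])
  fix i x assume "i < N" "a i \<le> x" "x < b i"
  then have "x < 4*k*i + 3*k"
    using tracked_intervals_subset_middle[OF assms(1)] by fastforce
  then show "x + k < u \<or> u + k < x"
    using block_end_le[OF \<open>i < N\<close>, of k] assms(2) by simp
qed

lemma floorlog_2_le_Suc_if_half_le: "g div 2 \<le> h \<Longrightarrow> floorlog 2 g \<le> Suc (floorlog 2 h)"
  using floorlog_mono[of "g div 2" h 2] by (subst compute_floorlog) auto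

definition interval_potential :: "nat \<Rightarrow> (nat \<Rightarrow> nat) \<Rightarrow> (nat \<Rightarrow> nat) \<Rightarrow> nat" where
  "interval_potential N a b = (\<Sum>i<N. floorlog 2 (b i - a i))"

lemma interval_potential_update:
  assumes "q < N" and "(b q - a q) div 2 \<le> \<beta> - \<alpha>"
  shows "interval_potential N a b \<le> interval_potential N (a(q := \<alpha>)) (b(q := \<beta>)) + 1"
proof -
  let ?f = "\<lambda>i. floorlog 2 (b i - a i)"
  let ?g = "\<lambda>i. floorlog 2 ((b(q := \<beta>)) i - (a(q := \<alpha>)) i)"
  have "sum ?f {..<N} = ?f q + sum ?f ({..<N} - {q})"
    using assms(1) by (simp add: sum.remove)
  also have "sum ?f ({..<N} - {q}) = sum ?g ({..<N} - {q})"
    by (rule sum.cong) auto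
  also have "?f q \<le> ?g q + 1"
    using floorlog_2_le_Suc_if_half_le[OF assms(2)] by simp
  also have "?g q + 1 + sum ?g ({..<N} - {q}) = sum ?g {..<N} + 1"
    using assms(1) by (simp add: sum.remove)
  finally show ?thesis
    unfolding interval_potential_def by simp
qed

lemma interval_potential_eq_0_if_dominating:
  assumes "tracked_intervals n k N D a b" "is_dominating {..<n} (path_power_adj k) D"
  shows "interval_potential N a b = 0"
proof -
  have "b i \<le> a i" if "i < N" for i
    using assms that
    by (auto simp: tracked_intervals_def is_dominating_iff_undominated_eq_empty)
  then show ?thesis
    unfolding interval_potential_def by (simp add: floorlog_def)
qed

lemma tracked_intervals_staller_answer:
  assumes "4*k*N \<le> n" "tracked_intervals n k N D a b"
    and v: "v \<in> undominated {..<n} (path_power_adj k) D"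
  shows "\<exists>u \<in> cnbhd {..<n} (path_power_adj k) v. \<exists>a' b'.
           tracked_intervals n k N (insert u D) a' b'
           \<and> interval_potential N a b \<le> interval_potential N a' b' + 1"
proof (cases "v < 4*k*N")
  case False
  have "v < n"
    using v by (rule undominated_path_power_less)
  then have "v \<in> cnbhd {..<n} (path_power_adj k) v"
    by (simp add: cnbhd_path_power path_dist_def)
  moreover have "tracked_intervals n k N (insert v D) a b"
    using False \<open>v < n\<close> by (intro tracked_intervals_insert_beyond[OF assms(2)]) simp_all
  ultimately show ?thesis
    by (intro bexI[of _ v] exI[of _ a] exI[of _ b]) simp_all
next
  case True
  then obtain q where "q < N" and block: "4*k*q \<le> v" "v < 4*k*q + 4*k"
    by (rule block_of_vertex)
  obtain u \<alpha> \<beta> where u: "4*k*q \<le> u" "u < 4*k*q + 4*k" "path_dist v u \<le> k"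
    and \<alpha>\<beta>: "a q \<le> \<alpha>" "\<beta> \<le> b q"
    and far: "\<And>x. \<alpha> \<le> x \<Longrightarrow> x < \<beta> \<Longrightarrow> x + k < u \<or> u + k < x"
    and halving: "(b q - a q) div 2 \<le> \<beta> - \<alpha>"
    by (rule block_answer[OF tracked_intervals_subset_middle[OF assms(2) \<open>q < N\<close>] block])
      (rule that)
  have "u < n"
    using u(2) block_end_le[OF \<open>q < N\<close>, of k] assms(1) by simp
  have "x + k < u \<or> u + k < x"
    if "i < N" "(a(q := \<alpha>)) i \<le> x" "x < (b(q := \<beta>)) i" for i x
  proof (cases "i = q")
    case True
    then show ?thesis using far that by simp
  next
    case False
    then have "4*k*i + k \<le> x" "x < 4*k*i + 3*k"
      using that tracked_intervals_subset_middle[OF assms(2) \<open>i < N\<close>] by auto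
    then show ?thesis
      using block_middle_far[OF False u(1,2)] by blast
  qed
  then have "tracked_intervals n k N (insert u D) (a(q := \<alpha>)) (b(q := \<beta>))"
    by (intro tracked_intervals_insert[OF tracked_intervals_shrink[OF assms(2) \<alpha>\<beta>] \<open>u < n\<close>])
  moreover have "interval_potential N a b \<le> interval_potential N (a(q := \<alpha>)) (b(q := \<beta>)) + 1"
    using \<open>q < N\<close> halving by (rule interval_potential_update)
  ultimately show ?thesis
    using \<open>u < n\<close> u(3) by (auto simp: cnbhd_path_power)
qed

lemma gamma_i_path_power_lower:
  "n div (4*k) * floorlog 2 (2*k) \<le> gamma_i_path_power n k"
proof -
  define N where "N = n div (4*k)"
  define a where "a i = 4*k*i + k" for i
  define b where "b i = 4*k*i + 3*k" for i
  have N: "4*k*N \<le> n"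
    unfolding N_def by (metis mult.commute div_times_less_eq_dividend)
  have "tracked_intervals n k N {} a b"
    using N by (auto simp: tracked_intervals_def a_def b_def dest!: block_end_le[where k = k])
  moreover have "ind_dom_win {..<n} (path_power_adj k) (gamma_i_path_power n k) {}"
    unfolding gamma_i_path_power_def
    by (rule ind_dom_win_indicated_domination_number) (rule ind_dom_win_path_power)
  ultimately have "interval_potential N (fst (a, b)) (snd (a, b)) \<le> gamma_i_path_power n k"
    using interval_potential_eq_0_if_dominating tracked_intervals_staller_answer[OF N]
    by (intro ind_dom_win_potential_le[where R = "\<lambda>D s. tracked_intervals n k N D (fst s) (snd s)"])
      (auto simp: split_paired_Ex)
  moreover have "interval_potential N a b = N * floorlog 2 (2*k)"
    unfolding interval_potential_def a_def b_def by simp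
  ultimately show ?thesis
    unfolding N_def by simp
qed

section \<open>Logarithms and the final estimate\<close>

lemma ceillog2_Suc_le_floorlog_double:
  assumes "0 < k"
  shows "ceillog2 (k + 1) + 1 \<le> floorlog 2 (2 * k)"
proof -
  have "k < 2 ^ floorlog 2 k"
    using floorlog_bounds[of k 2] assms by simp
  then have "ceillog2 (k + 1) \<le> floorlog 2 k"
    by (subst ceillog2_le_iff) auto
  moreover have "floorlog 2 (k * 2 ^ 1) = floorlog 2 k + 1"
    using assms by (rule floorlog_power) simp
  ultimately show ?thesis
    by (simp add: mult.commute)
qed

lemma ceiling_log2_Suc_eq_ceillog2: "\<lceil>log 2 (real k + 1)\<rceil> = int (ceillog2 (k + 1))"
proof -
  have "\<lceil>0 :: real\<rceil> \<le> \<lceil>log 2 (real k + 1)\<rceil>"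
    by (rule ceiling_mono) simp
  moreover have "ceillog2 (k + 1) = nat \<lceil>log 2 (real k + 1)\<rceil>"
    unfolding ceillog2_def by (simp add: add.commute)
  ultimately show ?thesis
    by simp
qed

lemma real_mult_div_le: "real (c * (n div d)) \<le> real c / real d * real n"
  using mult_left_mono[OF of_nat_div_le_of_nat[of n d], of "real c"] by simp

theorem theorem6p1:
  fixes n k :: nat
  assumes "2 \<le> k" and "k \<le> n"
  shows "real_of_int (\<lceil>log 2 (real k + 1)\<rceil> + 1) * real (n div (4 * k))
           \<le> real (gamma_i_path_power n k)
       \<and> real (gamma_i_path_power n k)
           \<le> real_of_int (\<lceil>log 2 (real k + 1)\<rceil> + 2) / real (2 * k + 2) * real n
              + real_of_int \<lceil>log 2 (real k + 1)\<rceil> + 2"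
proof -
  define L where "L = ceillog2 (k + 1)"
  have "L + 1 \<le> floorlog 2 (2*k)"
    using ceillog2_Suc_le_floorlog_double[of k] assms(1) unfolding L_def by simp
  then have "(L + 1) * (n div (4*k)) \<le> n div (4*k) * floorlog 2 (2*k)"
    unfolding mult.commute[of "n div (4*k)"] by (rule mult_le_mono1)
  also have "\<dots> \<le> gamma_i_path_power n k"
    by (rule gamma_i_path_power_lower)
  finally have lower: "real ((L + 1) * (n div (4*k))) \<le> real (gamma_i_path_power n k)"
    by (rule of_nat_mono)
  have upper: "real (gamma_i_path_power n k) \<le> real ((L + 2) * (n div (2*k + 2)) + L + 1)"
    using gamma_i_path_power_upper[of n k] unfolding L_def by (rule of_nat_mono)
  have "real ((L + 2) * (n div (2*k + 2))) \<le> real (L + 2) / real (2*k + 2) * real n"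
    by (rule real_mult_div_le)
  then show ?thesis
    using lower upper unfolding ceiling_log2_Suc_eq_ceillog2 L_def[symmetric]
    by (simp add: algebra_simps)
qed

end
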